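(* Let $\mu_Y\in\mathbb{R}$, $\sigma_Y>0$, $n\ge 2$, and let $X_1,\dots,X_n$ be i.i.d. with $X_i\sim LN(\mu_Y,\sigma_Y^2)$. With $A_n=\frac1n\sum_{i=1}^n X_i$ and $H_n=n\big/\sum_{i=1}^n (1/X_i)$, define $\hat k_n=\frac{n}{n-1}\left(\frac{A_n}{H_n}-1\right)$. Then $\hat k_n$ is an unbiased estimator of $k=C_v^2=\exp(\sigma_Y^2)-1$, i.e. $E(\hat k_n)=k=C_v^2$.
   Context: $X\sim LN(\mu_Y,\sigma_Y^2)$ means $\ln X\sim N(\mu_Y,\sigma_Y^2)$. For such $X$, $C_v=\sqrt{\operatorname{Var}(X)}/E[X]$ is the coefficient of variation, and $k=E[X]\,E[1/X]-1$ is the relative ratio of arithmetic to harmonic mean; one has $k=C_v^2=\exp(\sigma_Y^2)-1$. *)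

theory Defs
  imports "HOL-Probability.Probability"
begin

definition lognormal_rv :: "'a measure \<Rightarrow> ('a \<Rightarrow> real) \<Rightarrow> real \<Rightarrow> real \<Rightarrow> bool" where
  "lognormal_rv M X \<mu> \<sigma> \<longleftrightarrow>
     X \<in> borel_measurable M \<and> (AE \<omega> in M. 0 < X \<omega>) \<and>
     distributed M lborel (\<lambda>\<omega>. ln (X \<omega>)) (normal_density \<mu> \<sigma>)"

definition arith_mean :: "nat \<Rightarrow> (nat \<Rightarrow> 'a \<Rightarrow> real) \<Rightarrow> 'a \<Rightarrow> real" where
  "arith_mean n X \<omega> = (\<Sum>i=1..n. X i \<omega>) / real n"

definition harm_mean :: "nat \<Rightarrow> (nat \<Rightarrow> 'a \<Rightarrow> real) \<Rightarrow> 'a \<Rightarrow> real" where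
  "harm_mean n X \<omega> = real n / (\<Sum>i=1..n. 1 / X i \<omega>)"

definition k_hat :: "nat \<Rightarrow> (nat \<Rightarrow> 'a \<Rightarrow> real) \<Rightarrow> 'a \<Rightarrow> real" where
  "k_hat n X \<omega> = real n / (real n - 1) * (arith_mean n X \<omega> / harm_mean n X \<omega> - 1)"

end

theory Submission
  imports Defs
begin

text \<open>Since \<open>A\<^sub>n / H\<^sub>n = n\<^sup>-\<^sup>2 \<Sum>\<^sub>i \<Sum>\<^sub>j X\<^sub>i / X\<^sub>j\<close>, linearity reduces the expectation of the estimator
  to that of the ratios \<open>X\<^sub>i / X\<^sub>j\<close>: these equal 1 on the diagonal and, by independence,
  \<open>E X \<cdot> E (1/X) = exp \<sigma>\<^sup>2\<close> off it. Both this and the formula for \<open>C\<^sub>v\<^sup>2\<close> come from the lognormal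
  moments \<open>E X\<^sup>t = exp (t \<mu> + t\<^sup>2 \<sigma>\<^sup>2 / 2)\<close>, obtained by completing the square in the normal density.\<close>

lemma normal_density_mult_exp:
  assumes "\<sigma> > 0"
  shows "normal_density \<mu> \<sigma> x * exp (t * x)
    = exp (t * \<mu> + t\<^sup>2 * \<sigma>\<^sup>2 / 2) * normal_density (\<mu> + t * \<sigma>\<^sup>2) \<sigma> x"
proof -
  have "- (x - \<mu>)\<^sup>2 / (2 * \<sigma>\<^sup>2) + t * x
      = (t * \<mu> + t\<^sup>2 * \<sigma>\<^sup>2 / 2) + - (x - (\<mu> + t * \<sigma>\<^sup>2))\<^sup>2 / (2 * \<sigma>\<^sup>2)"
    using assms by (simp add: field_simps power2_eq_square)
  then show ?thesis
    unfolding normal_density_def by (simp add: mult_ac flip: exp_add)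
qed

lemma (in prob_space) indep_vars_indep_var:
  assumes "indep_vars M' X I" "i \<in> I" "j \<in> I" "i \<noteq> j"
  shows "indep_var (M' i) (X i) (M' j) (X j)"
proof -
  have "indep_var (Pi\<^sub>M {i} M') (\<lambda>\<omega>. restrict (\<lambda>k. X k \<omega>) {i})
      (Pi\<^sub>M {j} M') (\<lambda>\<omega>. restrict (\<lambda>k. X k \<omega>) {j})"
    using assms by (intro indep_var_restrict) auto
  then have "indep_var (M' i) ((\<lambda>f. f i) \<circ> (\<lambda>\<omega>. restrict (\<lambda>k. X k \<omega>) {i}))
      (M' j) ((\<lambda>f. f j) \<circ> (\<lambda>\<omega>. restrict (\<lambda>k. X k \<omega>) {j}))"
    by (rule indep_var_compose) auto
  then show ?thesis by (simp add: comp_def)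
qed

lemma lognormal_powr_moment:
  assumes "\<sigma> > 0" and "lognormal_rv M X \<mu> \<sigma>"
  shows "integrable M (\<lambda>\<omega>. X \<omega> powr t)"
    and "(\<integral>\<omega>. X \<omega> powr t \<partial>M) = exp (t * \<mu> + t\<^sup>2 * \<sigma>\<^sup>2 / 2)"
proof -
  have [measurable]: "X \<in> borel_measurable M"
    and pos: "AE \<omega> in M. 0 < X \<omega>"
    and distr: "distributed M lborel (\<lambda>\<omega>. ln (X \<omega>)) (normal_density \<mu> \<sigma>)"
    using assms(2) unfolding lognormal_rv_def by auto
  have AE: "AE \<omega> in M. exp (t * ln (X \<omega>)) = X \<omega> powr t"
    using pos by eventually_elim (simp add: powr_def mult.commute)
  have density: "(\<lambda>x. normal_density \<mu> \<sigma> x * exp (t * x))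
      = (\<lambda>x. exp (t * \<mu> + t\<^sup>2 * \<sigma>\<^sup>2 / 2) * normal_density (\<mu> + t * \<sigma>\<^sup>2) \<sigma> x)"
    using normal_density_mult_exp[OF assms(1)] by auto
  have "integrable lborel (\<lambda>x. normal_density \<mu> \<sigma> x * exp (t * x))"
    unfolding density using integrable_normal_density[OF assms(1)] by simp
  then have "integrable M (\<lambda>\<omega>. exp (t * ln (X \<omega>)))"
    using distributed_integrable[OF distr, of "\<lambda>x. exp (t * x)"] by simp
  then show "integrable M (\<lambda>\<omega>. X \<omega> powr t)"
    by (rule integrable_cong_AE_imp[OF _ _ AE]) measurable
  have "(\<integral>\<omega>. X \<omega> powr t \<partial>M) = (\<integral>\<omega>. exp (t * ln (X \<omega>)) \<partial>M)"
    using AE by (intro integral_cong_AE) (auto elim: AE_mp)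
  also have "\<dots> = (\<integral>x. normal_density \<mu> \<sigma> x * exp (t * x) \<partial>lborel)"
    using distributed_integral[OF distr, of "\<lambda>x. exp (t * x)"] by simp
  also have "\<dots> = exp (t * \<mu> + t\<^sup>2 * \<sigma>\<^sup>2 / 2)"
    unfolding density using integral_normal_density[OF assms(1)] by simp
  finally show "(\<integral>\<omega>. X \<omega> powr t \<partial>M) = exp (t * \<mu> + t\<^sup>2 * \<sigma>\<^sup>2 / 2)" .
qed

lemma (in prob_space) lognormal_mean:
  assumes "\<sigma> > 0" and "lognormal_rv M X \<mu> \<sigma>"
  shows "integrable M X" and "expectation X = exp (\<mu> + \<sigma>\<^sup>2 / 2)"
proof -
  have [measurable]: "X \<in> borel_measurable M" and pos: "AE \<omega> in M. 0 < X \<omega>"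
    using assms(2) unfolding lognormal_rv_def by auto
  have AE: "AE \<omega> in M. X \<omega> powr 1 = X \<omega>"
    using pos by eventually_elim simp
  show "integrable M X"
    using lognormal_powr_moment(1)[OF assms, of 1] by (rule integrable_cong_AE_imp) (use AE in auto)
  show "expectation X = exp (\<mu> + \<sigma>\<^sup>2 / 2)"
    using lognormal_powr_moment(2)[OF assms, of 1] integral_cong_AE[OF _ _ AE] by simp
qed

lemma (in prob_space) lognormal_inverse_mean:
  assumes "\<sigma> > 0" and "lognormal_rv M X \<mu> \<sigma>"
  shows "integrable M (\<lambda>\<omega>. 1 / X \<omega>)" and "expectation (\<lambda>\<omega>. 1 / X \<omega>) = exp (- \<mu> + \<sigma>\<^sup>2 / 2)"
proof -
  have [measurable]: "X \<in> borel_measurable M" and pos: "AE \<omega> in M. 0 < X \<omega>"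
    using assms(2) unfolding lognormal_rv_def by auto
  have AE: "AE \<omega> in M. X \<omega> powr (-1) = 1 / X \<omega>"
    using pos by eventually_elim (simp add: powr_minus_divide)
  show "integrable M (\<lambda>\<omega>. 1 / X \<omega>)"
    using lognormal_powr_moment(1)[OF assms, of "-1"] by (rule integrable_cong_AE_imp) (use AE in auto)
  show "expectation (\<lambda>\<omega>. 1 / X \<omega>) = exp (- \<mu> + \<sigma>\<^sup>2 / 2)"
    using lognormal_powr_moment(2)[OF assms, of "-1"] integral_cong_AE[OF _ _ AE] by simp
qed

lemma (in prob_space) lognormal_second_moment:
  assumes "\<sigma> > 0" and "lognormal_rv M X \<mu> \<sigma>"
  shows "integrable M (\<lambda>\<omega>. (X \<omega>)\<^sup>2)" and "expectation (\<lambda>\<omega>. (X \<omega>)\<^sup>2) = exp (2 * \<mu> + 2 * \<sigma>\<^sup>2)"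
proof -
  have [measurable]: "X \<in> borel_measurable M" and pos: "AE \<omega> in M. 0 < X \<omega>"
    using assms(2) unfolding lognormal_rv_def by auto
  have AE: "AE \<omega> in M. X \<omega> powr 2 = (X \<omega>)\<^sup>2"
    using pos by eventually_elim (simp add: powr_numeral)
  show "integrable M (\<lambda>\<omega>. (X \<omega>)\<^sup>2)"
    using lognormal_powr_moment(1)[OF assms, of 2] by (rule integrable_cong_AE_imp) (use AE in auto)
  show "expectation (\<lambda>\<omega>. (X \<omega>)\<^sup>2) = exp (2 * \<mu> + 2 * \<sigma>\<^sup>2)"
    using lognormal_powr_moment(2)[OF assms, of 2] integral_cong_AE[OF _ _ AE] by simp
qed

lemma (in prob_space) lognormal_variance_div_mean_sq:
  assumes "\<sigma> > 0" and "lognormal_rv M X \<mu> \<sigma>"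
  shows "variance X / (expectation X)\<^sup>2 = exp (\<sigma>\<^sup>2) - 1"
proof -
  have "(expectation X)\<^sup>2 = exp (2 * \<mu> + \<sigma>\<^sup>2)"
    using lognormal_mean[OF assms] by (simp add: power2_eq_square flip: exp_add)
  moreover have "variance X = exp (2 * \<mu> + \<sigma>\<^sup>2) * (exp (\<sigma>\<^sup>2) - 1)"
    using variance_eq[OF lognormal_mean(1) lognormal_second_moment(1), OF assms assms]
      lognormal_mean(2)[OF assms] lognormal_second_moment(2)[OF assms]
    by (simp add: power2_eq_square right_diff_distrib flip: exp_add)
  ultimately show ?thesis by simp
qed

lemma (in prob_space) lognormal_indep_ratio:
  assumes "\<sigma> > 0" and "lognormal_rv M X \<mu> \<sigma>" and "lognormal_rv M Y \<mu> \<sigma>"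
    and "indep_var borel X borel Y"
  shows "integrable M (\<lambda>\<omega>. X \<omega> / Y \<omega>)" and "expectation (\<lambda>\<omega>. X \<omega> / Y \<omega>) = exp (\<sigma>\<^sup>2)"
proof -
  have "indep_var borel (id \<circ> X) borel ((\<lambda>y. 1 / y) \<circ> Y)"
    by (rule indep_var_compose[OF assms(4)]) auto
  then have indep: "indep_var borel X borel (\<lambda>\<omega>. 1 / Y \<omega>)"
    by (simp add: comp_def)
  note integrals = lognormal_mean(1)[OF assms(1,2)] lognormal_inverse_mean(1)[OF assms(1,3)]
  show "integrable M (\<lambda>\<omega>. X \<omega> / Y \<omega>)"
    using indep_var_integrable[OF indep integrals] by simp
  have "expectation (\<lambda>\<omega>. X \<omega> / Y \<omega>) = exp (\<mu> + \<sigma>\<^sup>2 / 2) * exp (- \<mu> + \<sigma>\<^sup>2 / 2)"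
    using indep_var_lebesgue_integral[OF indep integrals]
      lognormal_mean(2)[OF assms(1,2)] lognormal_inverse_mean(2)[OF assms(1,3)] by simp
  also have "\<dots> = exp (\<sigma>\<^sup>2)"
    by (simp flip: exp_add)
  finally show "expectation (\<lambda>\<omega>. X \<omega> / Y \<omega>) = exp (\<sigma>\<^sup>2)" .
qed

lemma (in prob_space) lognormal_self_ratio:
  assumes "lognormal_rv M X \<mu> \<sigma>"
  shows "integrable M (\<lambda>\<omega>. X \<omega> / X \<omega>)" and "expectation (\<lambda>\<omega>. X \<omega> / X \<omega>) = 1"
proof -
  have [measurable]: "X \<in> borel_measurable M" and pos: "AE \<omega> in M. 0 < X \<omega>"
    using assms unfolding lognormal_rv_def by auto
  from pos have AE: "AE \<omega> in M. 1 = X \<omega> / X \<omega>"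
    by eventually_elim simp
  show "integrable M (\<lambda>\<omega>. X \<omega> / X \<omega>)"
    by (rule integrable_cong_AE_imp[OF integrable_const _ AE]) measurable
  show "expectation (\<lambda>\<omega>. X \<omega> / X \<omega>) = 1"
    using integral_cong_AE[OF _ _ AE] prob_space by simp
qed

lemma sum_sum_diagonal_if:
  assumes "finite A"
  shows "(\<Sum>i\<in>A. \<Sum>j\<in>A. if i = j then a else b)
    = real (card A) * (a + (real (card A) - 1) * (b :: real))"
proof -
  have "(\<Sum>j\<in>A. if i = j then a else b) = real (card A) * b + (a - b)" if "i \<in> A" for i
  proof -
    have "(\<Sum>j\<in>A. if i = j then a else b) = (\<Sum>j\<in>A. b + (if i = j then a - b else 0))"
      by (rule sum.cong) auto
    also have "\<dots> = real (card A) * b + (a - b)"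
      using that assms by (simp add: sum.distrib)
    finally show ?thesis .
  qed
  then have "(\<Sum>i\<in>A. \<Sum>j\<in>A. if i = j then a else b) = (\<Sum>i\<in>A. real (card A) * b + (a - b))"
    by (rule sum.cong[OF refl])
  then show ?thesis
    by (simp add: algebra_simps)
qed

lemma (in prob_space) lognormal_iid_sum_ratios:
  assumes "\<sigma> > 0" and "finite I"
    and "indep_vars (\<lambda>_. borel) X I"
    and "\<And>i. i \<in> I \<Longrightarrow> lognormal_rv M (X i) \<mu> \<sigma>"
  shows "integrable M (\<lambda>\<omega>. \<Sum>i\<in>I. \<Sum>j\<in>I. X i \<omega> / X j \<omega>)"
    and "expectation (\<lambda>\<omega>. \<Sum>i\<in>I. \<Sum>j\<in>I. X i \<omega> / X j \<omega>)
      = real (card I) * (1 + (real (card I) - 1) * exp (\<sigma>\<^sup>2))"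
proof -
  have ratio: "integrable M (\<lambda>\<omega>. X i \<omega> / X j \<omega>)
      \<and> expectation (\<lambda>\<omega>. X i \<omega> / X j \<omega>) = (if i = j then 1 else exp (\<sigma>\<^sup>2))"
    if "i \<in> I" "j \<in> I" for i j
  proof (cases "i = j")
    case True
    then show ?thesis
      using lognormal_self_ratio[OF assms(4)[OF that(1)]] by simp
  next
    case False
    then show ?thesis
      using lognormal_indep_ratio[OF assms(1) assms(4)[OF that(1)] assms(4)[OF that(2)]
          indep_vars_indep_var[OF assms(3) that]] by simp
  qed
  show "integrable M (\<lambda>\<omega>. \<Sum>i\<in>I. \<Sum>j\<in>I. X i \<omega> / X j \<omega>)"
    using ratio by (intro Bochner_Integration.integrable_sum) auto
  have "expectation (\<lambda>\<omega>. \<Sum>i\<in>I. \<Sum>j\<in>I. X i \<omega> / X j \<omega>)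
      = (\<Sum>i\<in>I. \<Sum>j\<in>I. expectation (\<lambda>\<omega>. X i \<omega> / X j \<omega>))"
    using ratio by (simp add: Bochner_Integration.integral_sum Bochner_Integration.integrable_sum)
  also have "\<dots> = (\<Sum>i\<in>I. \<Sum>j\<in>I. if i = j then 1 else exp (\<sigma>\<^sup>2))"
    using ratio by (intro sum.cong) auto
  finally show "expectation (\<lambda>\<omega>. \<Sum>i\<in>I. \<Sum>j\<in>I. X i \<omega> / X j \<omega>)
      = real (card I) * (1 + (real (card I) - 1) * exp (\<sigma>\<^sup>2))"
    using sum_sum_diagonal_if[OF assms(2)] by simp
qed

lemma k_hat_eq_sum_ratios:
  "k_hat n X \<omega> = real n / (real n - 1)
    * ((\<Sum>i\<in>{1..n}. \<Sum>j\<in>{1..n}. X i \<omega> / X j \<omega>) / (real n)\<^sup>2 - 1)"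
  by (simp add: k_hat_def arith_mean_def harm_mean_def sum_product power2_eq_square)

theorem proposition2:
  fixes M :: "'a measure" and X :: "nat \<Rightarrow> 'a \<Rightarrow> real"
    and \<mu>Y \<sigma>Y :: real and n :: nat
  assumes "prob_space M"
    and "\<sigma>Y > 0" and "n \<ge> 2"
    and "prob_space.indep_vars M (\<lambda>_. borel) X {1..n}"
    and "\<And>i. i \<in> {1..n} \<Longrightarrow> lognormal_rv M (X i) \<mu>Y \<sigma>Y"
  shows "integrable M (k_hat n X)
    \<and> prob_space.expectation M (k_hat n X) = exp (\<sigma>Y\<^sup>2) - 1
    \<and> exp (\<sigma>Y\<^sup>2) - 1 = prob_space.variance M (X 1) / (prob_space.expectation M (X 1))\<^sup>2"
proof -
  interpret prob_space M by fact
  let ?S = "\<lambda>\<omega>. \<Sum>i\<in>{1..n}. \<Sum>j\<in>{1..n}. X i \<omega> / X j \<omega>"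
  note S = lognormal_iid_sum_ratios[OF assms(2) finite_atLeastAtMost assms(4,5)]
  have k_hat: "k_hat n X = (\<lambda>\<omega>. real n / (real n - 1) * (?S \<omega> / (real n)\<^sup>2 - 1))"
    by (intro ext) (rule k_hat_eq_sum_ratios)
  have "expectation (k_hat n X)
      = real n / (real n - 1) * (real n * (1 + (real n - 1) * exp (\<sigma>Y\<^sup>2)) / (real n)\<^sup>2 - 1)"
    unfolding k_hat using S by (simp add: prob_space)
  also have "\<dots> = exp (\<sigma>Y\<^sup>2) - 1"
    using assms(3) by (simp add: field_simps power2_eq_square)
  finally show ?thesis
    unfolding k_hat using S lognormal_variance_div_mean_sq[OF assms(2,5)] assms(3) by simp
qed

end
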